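(* Let $1\le m<n$, $d\in[n]$, and suppose every valuation $v_1,\dots,v_n$ is $d$-self-bounding. Then for every signal profile $\mathbf s$, $\sum_{i=1}^n\mathbb E_{r,\pi}[c^m_i]\le4(d+1)m$. Consequently, with $\eta=4(d+1)$ and $x_i=\mathbb E_{r,\pi}[c^m_i]/\eta$, we have $\sum_{i=1}^nx_i\le m$.
   Context: $n$ bidders, signals $s_i\in S_i\subseteq\mathbb R$, valuations $v_i:\mathbf S\to\mathbb R_{>0}$, $\mathbf S=S_1\times\cdots\times S_n$. Lower estimates $\underline v_j^{(i)}(\mathbf s)=\inf_{o_i\in S_i}v_j(o_i,\mathbf s_{-i})$. $v$ is $d$-self-bounding if $\sum_i(v(\mathbf s)-\inf_{o_i}v(o_i,\mathbf s_{-i}))\le d\,v(\mathbf s)$ for all $\mathbf s$. For $r\in[0,1)$, $w>0$: $f_r(w)=2^{r+k}$ for the integer $k$ with $2^{r+k}\le w<2^{r+k+1}$; $f_r(0)=0$. For a permutation $\pi$ of $[n]$, $a$ associated with bidder $i$ and $b$ with bidder $j$: $a>_\pi b$ iff $a>b$, or $a=b$ and $\pi(i)>\pi(j)$. $c^m_i(r,\pi)=1$ iff $f_r(v_i(\mathbf s))>_\pi f_r(\underline v_j^{(i)}(\mathbf s))$ for at least $n-m$ bidders $j\ne i$, else $0$; $r\sim U[0,1)$, $\pi$ uniform, independent. *)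

theory Defs
  imports "HOL-Analysis.Analysis" "HOL-Combinatorics.Permutations"
begin

text \<open>Bidders are indexed by 0..<n. A signal profile is an element of
  PiE {..<n} S; replacing bidder i signal by x is s(i := x).\<close>

definition lower_est :: "(nat \<Rightarrow> real set) \<Rightarrow> (nat \<Rightarrow> (nat \<Rightarrow> real) \<Rightarrow> real)
    \<Rightarrow> nat \<Rightarrow> nat \<Rightarrow> (nat \<Rightarrow> real) \<Rightarrow> real" where
  "lower_est S v j i s = (INF x\<in>S i. v j (s(i := x)))"

definition self_bounding :: "nat \<Rightarrow> (nat \<Rightarrow> real set) \<Rightarrow> real \<Rightarrow> ((nat \<Rightarrow> real) \<Rightarrow> real) \<Rightarrow> bool" where
  "self_bounding n S d u \<longleftrightarrow>
     (\<forall>s\<in>PiE {..<n} S. (\<Sum>i<n. u s - (INF x\<in>S i. u (s(i := x)))) \<le> d * u s)"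

definition fr :: "real \<Rightarrow> real \<Rightarrow> real" where
  "fr r w = (if w \<le> 0 then 0 else 2 powr (r + of_int \<lfloor>log 2 w - r\<rfloor>))"

definition gt_pi :: "(nat \<Rightarrow> nat) \<Rightarrow> real \<Rightarrow> nat \<Rightarrow> real \<Rightarrow> nat \<Rightarrow> bool" where
  "gt_pi \<pi> a i b j \<longleftrightarrow> a > b \<or> (a = b \<and> \<pi> i > \<pi> j)"

definition cm :: "nat \<Rightarrow> (nat \<Rightarrow> real set) \<Rightarrow> (nat \<Rightarrow> (nat \<Rightarrow> real) \<Rightarrow> real) \<Rightarrow> nat
    \<Rightarrow> (nat \<Rightarrow> real) \<Rightarrow> nat \<Rightarrow> real \<Rightarrow> (nat \<Rightarrow> nat) \<Rightarrow> real" where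
  "cm n S v m s i r \<pi> =
     (if n - m \<le> card {j. j < n \<and> j \<noteq> i \<and>
            gt_pi \<pi> (fr r (v i s)) i (fr r (lower_est S v j i s)) j}
      then 1 else 0)"

definition exp_cm :: "nat \<Rightarrow> (nat \<Rightarrow> real set) \<Rightarrow> (nat \<Rightarrow> (nat \<Rightarrow> real) \<Rightarrow> real) \<Rightarrow> nat
    \<Rightarrow> (nat \<Rightarrow> real) \<Rightarrow> nat \<Rightarrow> real" where
  "exp_cm n S v m s i =
     (\<Sum>\<pi>\<in>{\<pi>. \<pi> permutes {..<n}}. (LINT r:{0..<1}|lborel. cm n S v m s i r \<pi>)) / fact n"

end

theory Submission
  imports Defs
begin

text \<open>Fix the rounding offset \<open>r\<close> and call the \<open>m\<close> bidders of highest value the top.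
  A winner \<open>i\<close> outside the top beats some top bidder \<open>k\<close>. Unless the rounding separates
  \<open>k\<close>'s value from its lower estimate under \<open>i\<close>'s signal, this forces \<open>i\<close>'s rounded value to
  be the level of the \<open>m\<close>-th bidder, and \<open>i\<close> must come early in the random order \<open>\<pi>\<close> among
  its rivals: the top bidders at that level and the unseparated bidders of the same level.
  Over \<open>r\<close> a pair is separated with probability at most \<open>2 (1 - l / a)\<close>, so by
  self-boundingness a bidder separates at most \<open>2 d\<close> others in expectation. The tie case is
  paid for by the separated bidders of the level, which receive telescoping weights
  \<open>1 / t - 1 / (t + 1)\<close> according to their rank \<open>t\<close> below the top; these weights sum to at
  most \<open>1\<close>. Altogether the expected number of winners is at most \<open>2 m + 4 d m\<close>.\<close>

lemma fr_mono: assumes "x \<le> y" shows "fr r x \<le> fr r y"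
proof (cases "x \<le> 0")
  case False
  hence "\<lfloor>log 2 x - r\<rfloor> \<le> \<lfloor>log 2 y - r\<rfloor>" using assms by (intro floor_mono) simp
  thus ?thesis using False assms by (simp add: fr_def)
qed (simp add: fr_def)

lemma fr_fr [simp]: "fr r (fr r w) = fr r w"
  by (simp add: fr_def)

lemma fr_eq_if_not_less_fr: assumes "x \<le> y" "\<not> x < fr r y" shows "fr r x = fr r y"
  using fr_mono[OF assms(1), of r] fr_mono[of "fr r y" x r] assms(2) by simp

lemma measurable_fr [measurable]: "(\<lambda>r. fr r w) \<in> borel_measurable borel"
  unfolding fr_def by measurable

lemma minus_log2_le_chord:
  assumes "1/2 \<le> t" "t \<le> 1" shows "- log 2 t \<le> 2 * (1 - t)"
proof -
  define \<theta> where "\<theta> = 2*t - 1"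
  have \<theta>: "0 \<le> \<theta>" "\<theta> \<le> 1" using assms by (auto simp: \<theta>_def)
  have "exp ((1 - \<theta>) *\<^sub>R (- ln 2) + \<theta> *\<^sub>R 0) \<le> (1 - \<theta>) * exp (- ln 2) + \<theta> * exp 0"
    using convex_onD[OF exp_convex \<theta>, of "- ln 2" 0] by simp
  also have "\<dots> = t" by (simp add: \<theta>_def exp_minus field_simps)
  finally have "exp ((2*t - 2) * ln 2) \<le> t" by (simp add: \<theta>_def algebra_simps)
  hence "(2*t - 2) * ln 2 \<le> ln t" using assms by (subst ln_ge_iff) auto
  thus ?thesis by (simp add: log_def field_simps)
qed

text \<open>With \<open>log 2 a = p + c\<close>, \<open>0 \<le> c < 1\<close>, we have \<open>fr r a = 2 powr (p + r)\<close> for \<open>r \<le> c\<close>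
  and \<open>2 powr (p - 1 + r)\<close> for \<open>r > c\<close>, so \<open>l < fr r a\<close> holds on a window of length
  \<open>log 2 (a / l)\<close> (mod 1) ending at \<open>c\<close>.\<close>
lemma measure_fr_greater_le_log:
  assumes "0 < l" "l \<le> a" "a < 2 * l"
  shows "measure lborel ({0..<1} \<inter> {r. l < fr r a}) \<le> log 2 (a / l)"
proof -
  let ?E = "{0..<1} \<inter> {r. l < fr r a}"
  define x where "x = log 2 a"
  define c where "c = x - \<lfloor>x\<rfloor>"
  define z where "z = log 2 (a / l)"
  have c: "0 \<le> c" "c < 1" unfolding c_def by linarith+
  have z: "0 \<le> z" "z < 1" using assms by (auto simp: z_def divide_less_eq)
  have z_eq: "z = x - log 2 l" using assms by (simp add: z_def x_def log_divide)
  have window: "c - z < r \<and> r \<le> c \<or> c - z + 1 < r" if "r \<in> ?E" for r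
  proof -
    have r: "0 \<le> r" "r < 1" using that by auto
    have "l < 2 powr (r + of_int \<lfloor>x - r\<rfloor>)" using that assms by (simp add: fr_def x_def)
    hence "log 2 l < r + of_int \<lfloor>x - r\<rfloor>" using assms by (simp add: log_less_iff)
    moreover have "\<lfloor>x - r\<rfloor> = \<lfloor>x\<rfloor> \<and> r \<le> c \<or> \<lfloor>x - r\<rfloor> = \<lfloor>x\<rfloor> - 1"
      unfolding c_def using r by linarith
    ultimately show ?thesis unfolding c_def z_eq by auto
  qed
  show ?thesis
  proof (cases "z \<le> c")
    case True
    have "?E \<subseteq> {c - z .. c}" using window True c by fastforce
    hence "measure lborel ?E \<le> measure lborel {c - z .. c}"
      by (intro measure_mono_fmeasurable) (auto intro: fmeasurable_compact)
    thus ?thesis using z by (simp add: z_def)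
  next
    case False
    have "?E \<subseteq> {0 .. c} \<union> {c - z + 1 .. 1}" using window by fastforce
    hence "measure lborel ?E \<le> measure lborel ({0 .. c} \<union> {c - z + 1 .. 1})"
      by (intro measure_mono_fmeasurable) (auto intro: fmeasurable_compact)
    also have "\<dots> \<le> measure lborel {0 .. c} + measure lborel {c - z + 1 .. 1}"
      by (intro measure_Un_le) auto
    finally show ?thesis using c z False by (simp add: z_def)
  qed
qed

lemma measure_fr_greater_le:
  assumes "0 \<le> l" "l \<le> a" "0 < a"
  shows "measure lborel ({0..<1} \<inter> {r. l < fr r a}) \<le> 2 * (1 - l / a)"
proof (cases "2 * l \<le> a")
  case True
  have "measure lborel ({0..<1} \<inter> {r. l < fr r a}) \<le> measure lborel {0..1::real}"
    by (intro measure_mono_fmeasurable) (auto intro: fmeasurable_compact)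
  moreover have "1 \<le> 2 * (1 - l / a)" using True assms by (simp add: field_simps)
  ultimately show ?thesis by simp
next
  case False
  have "measure lborel ({0..<1} \<inter> {r. l < fr r a}) \<le> - log 2 (l / a)"
    using measure_fr_greater_le_log[of l a] False assms by (simp add: log_divide)
  also have "\<dots> \<le> 2 * (1 - l / a)"
    using False assms by (intro minus_log2_le_chord) (auto simp: field_simps)
  finally show ?thesis .
qed

definition uniform01 :: "real measure" where
  "uniform01 = restrict_space lborel {0..<1}"

lemma finite_measure_uniform01: "finite_measure uniform01"
  unfolding uniform01_def by (intro finite_measureI) (simp add: emeasure_restrict_space)

lemma measure_space_uniform01 [simp]: "measure uniform01 (space uniform01) = 1"
  by (simp add: uniform01_def measure_restrict_space space_restrict_space)

lemma set_integral_eq_uniform01: "(LINT r:{0..<1}|lborel. f r) = integral\<^sup>L uniform01 (f :: real \<Rightarrow> real)"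
  unfolding uniform01_def set_lebesgue_integral_def by (rule integral_restrict_space[symmetric]) simp

lemma integrable_uniform01:
  assumes "f \<in> borel_measurable borel" "\<And>r. \<bar>f r\<bar> \<le> B"
  shows "integrable uniform01 (f :: real \<Rightarrow> real)"
  using assms unfolding uniform01_def
  by (intro finite_measure.integrable_const_bound[OF finite_measure_uniform01[unfolded uniform01_def]])
     (auto intro: measurable_restrict_space1)

lemma integral_uniform01_fr_greater_le:
  assumes "0 \<le> l" "l \<le> a" "0 < a"
  shows "(\<integral>r. of_bool (l < fr r a) \<partial>uniform01) \<le> 2 * (1 - l / a)"
proof -
  have "(\<integral>r. of_bool (l < fr r a) \<partial>uniform01) = integral\<^sup>L uniform01 (indicator {r. l < fr r a})"
    by (intro Bochner_Integration.integral_cong) (auto simp: indicator_def)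
  also have "\<dots> = measure lborel ({0..<1} \<inter> {r. l < fr r a})"
    by (simp add: uniform01_def measure_restrict_space Int_commute)
  finally show ?thesis using measure_fr_greater_le[OF assms] by simp
qed

definition among_top :: "'a set \<Rightarrow> ('a \<Rightarrow> nat) \<Rightarrow> nat \<Rightarrow> 'a \<Rightarrow> bool" where
  "among_top Z \<pi> k j \<longleftrightarrow> card {j'\<in>Z. j' \<noteq> j \<and> \<pi> j < \<pi> j'} < k"

lemma card_among_top_le:
  assumes "finite Z" "inj_on \<pi> Z"
  shows "card {j\<in>Z. among_top Z \<pi> k j} \<le> k"
proof (rule ccontr)
  define T where "T = {j\<in>Z. among_top Z \<pi> k j}"
  assume "\<not> card {j\<in>Z. among_top Z \<pi> k j} \<le> k"
  hence big: "k < card T" by (simp add: T_def)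
  have "finite T" using assms(1) by (simp add: T_def)
  moreover have "T \<noteq> {}" using big by auto
  ultimately obtain j0 where j0: "j0 \<in> T" "\<forall>j\<in>T. \<pi> j0 \<le> \<pi> j"
    using arg_min_if_finite[of T \<pi>] by (metis not_le)
  have "T - {j0} \<subseteq> {j\<in>Z. j \<noteq> j0 \<and> \<pi> j0 < \<pi> j}"
    using j0 assms(2) by (fastforce simp: T_def inj_on_def order_le_less)
  hence "card (T - {j0}) \<le> card {j\<in>Z. j \<noteq> j0 \<and> \<pi> j0 < \<pi> j}"
    using assms(1) by (intro card_mono) auto
  moreover have "among_top Z \<pi> k j0" using j0 by (simp add: T_def)
  ultimately show False
    using big j0(1) \<open>finite T\<close> unfolding among_top_def by simp
qed

lemma among_top_comp_transpose:
  assumes "i \<in> Z" "j \<in> Z"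
  shows "among_top Z (\<pi> \<circ> Transposition.transpose i j) k i = among_top Z \<pi> k j"
proof -
  let ?t = "Transposition.transpose i j"
  have "{j'\<in>Z. j' \<noteq> i \<and> (\<pi> \<circ> ?t) i < (\<pi> \<circ> ?t) j'} = ?t -` {j'\<in>Z. j' \<noteq> j \<and> \<pi> j < \<pi> j'}"
    using assms by (auto simp: Transposition.transpose_def)
  moreover have "card (?t -` {j'\<in>Z. j' \<noteq> j \<and> \<pi> j < \<pi> j'}) = card {j'\<in>Z. j' \<noteq> j \<and> \<pi> j < \<pi> j'}"
    by (intro card_vimage_inj) (auto simp: inj_transpose surj_transpose)
  ultimately show ?thesis by (simp add: among_top_def)
qed

lemma card_permutes_among_top_le:
  assumes Z: "Z \<subseteq> A" "finite A" and i: "i \<in> Z"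
  shows "card {\<pi>. \<pi> permutes A \<and> among_top Z \<pi> k i} * card Z \<le> k * card {\<pi>. \<pi> permutes A}"
proof -
  define P where "P = {\<pi>. \<pi> permutes A}"
  have "finite P" using Z by (simp add: P_def finite_permutations)
  have "finite Z" using Z finite_subset by blast
  have same_count: "card {\<pi>\<in>P. among_top Z \<pi> k i} = card {\<pi>\<in>P. among_top Z \<pi> k j}" if "j \<in> Z" for j
  proof -
    let ?t = "Transposition.transpose i j"
    have "?t permutes A" using Z i that by (intro permutes_swap_id) auto
    hence "{\<pi>\<in>P. among_top Z \<pi> k j} = (\<lambda>\<pi>. \<pi> \<circ> ?t) -` {\<pi>\<in>P. among_top Z \<pi> k i}"
      using among_top_comp_transpose[OF i that] permutes_compose[of ?t A]
      by (auto simp: P_def) (metis comp_assoc comp_id transpose_comp_involutory)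
    moreover have "bij (\<lambda>\<pi>. \<pi> \<circ> ?t)"
      by (rule o_bij[where g="\<lambda>\<pi>. \<pi> \<circ> ?t"]) (auto simp: fun_eq_iff)
    hence "card ((\<lambda>\<pi>. \<pi> \<circ> ?t) -` {\<pi>\<in>P. among_top Z \<pi> k i}) = card {\<pi>\<in>P. among_top Z \<pi> k i}"
      by (intro card_vimage_inj) (auto simp: bij_def)
    ultimately show ?thesis by simp
  qed
  have "card {\<pi>\<in>P. among_top Z \<pi> k i} * card Z = (\<Sum>\<pi>\<in>P. card {j\<in>Z. among_top Z \<pi> k j})"
    using same_count \<open>finite P\<close> \<open>finite Z\<close> by (intro sum_multicount[symmetric]) auto
  also have "\<dots> \<le> (\<Sum>\<pi>\<in>P. k)"
    using \<open>finite Z\<close> by (intro sum_mono card_among_top_le) (auto simp: P_def dest: permutes_inj_on)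
  finally show ?thesis by (simp add: P_def mult.commute)
qed

definition harm_weight :: "nat \<Rightarrow> real" where
  "harm_weight t = 1 / real t - 1 / real (t + 1)"

lemma harm_weight_eq: "0 < t \<Longrightarrow> harm_weight t = 1 / (real t * real (t + 1))"
  unfolding harm_weight_def by (simp add: field_simps)

lemma harm_weight_nonneg: "0 < t \<Longrightarrow> 0 \<le> harm_weight t"
  by (simp add: harm_weight_eq)

lemma harm_weight_antimono: assumes "0 < s" "s \<le> t" shows "harm_weight t \<le> harm_weight s"
proof -
  have "real s * real (s + 1) \<le> real t * real (t + 1)" using assms by (intro mult_mono) auto
  thus ?thesis using assms by (simp add: harm_weight_eq frac_le)
qed

lemma sum_harm_weight_le_1: assumes "R \<subseteq> {1..N}" shows "(\<Sum>t\<in>R. harm_weight t) \<le> 1"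
proof -
  have "(\<Sum>t\<in>R. harm_weight t) \<le> (\<Sum>t\<in>{1..N}. harm_weight t)"
    using assms by (intro sum_mono2) (auto simp: harm_weight_nonneg)
  also have "\<dots> = 1 - 1 / real (N + 1)" by (induction N) (auto simp: harm_weight_def)
  also have "\<dots> \<le> 1" by simp
  finally show ?thesis .
qed

text \<open>Among subsets of \<open>{1..\<beta>}\<close> of a given size, the sum telescopes to its minimum on a
  final segment \<open>{\<beta> - card R + 1..\<beta>}\<close>.\<close>
lemma sum_harm_weight_ge:
  assumes "R \<subseteq> {1..\<beta>}"
  shows "1 / real (\<beta> - card R + 1) - 1 / real (\<beta> + 1) \<le> (\<Sum>t\<in>R. harm_weight t)"
  using assms
proof (induction \<beta> arbitrary: R)
  case (Suc b)
  have "finite R" using Suc.prems finite_subset by blast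
  show ?case
  proof (cases "Suc b \<in> R")
    case False
    hence R: "R \<subseteq> {1..b}" using Suc.prems by (auto simp: subset_iff le_Suc_eq)
    hence "card R \<le> b" using card_mono[OF _ R] by simp
    hence "harm_weight (Suc b) \<le> harm_weight (b - card R + 1)" by (intro harm_weight_antimono) auto
    thus ?thesis using Suc.IH[OF R] \<open>card R \<le> b\<close> by (simp add: harm_weight_def Suc_diff_le)
  next
    case True
    have R: "R - {Suc b} \<subseteq> {1..b}" using Suc.prems by auto
    have "card R \<le> Suc b" using card_mono[OF _ Suc.prems] by simp
    moreover have "card (R - {Suc b}) = card R - 1" "0 < card R"
      using True \<open>finite R\<close> by (auto simp: card_gt_0_iff)
    moreover have "(\<Sum>t\<in>R. harm_weight t) = harm_weight (Suc b) + (\<Sum>t\<in>R - {Suc b}. harm_weight t)"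
      using True \<open>finite R\<close> by (simp add: sum.remove)
    ultimately show ?thesis using Suc.IH[OF R] by (simp add: harm_weight_def)
  qed
qed simp

lemma obtain_decreasing_enumeration:
  fixes a :: "nat \<Rightarrow> real"
  obtains \<sigma> where "bij_betw \<sigma> {..<n} {..<n}"
    and "\<And>t t'. t \<le> t' \<Longrightarrow> t' < n \<Longrightarrow> a (\<sigma> t') \<le> a (\<sigma> t)"
proof -
  define xs where "xs = sort_key (\<lambda>j. - a j) [0..<n]"
  have "distinct xs" "set xs = {..<n}" "length xs = n" unfolding xs_def by auto
  hence "bij_betw ((!) xs) {..<n} {..<n}" using bij_betw_nth[of xs] by simp
  moreover have "a (xs ! t') \<le> a (xs ! t)" if "t \<le> t'" "t' < n" for t t'
  proof -
    have "sorted (map (\<lambda>j. - a j) xs)" unfolding xs_def by (rule sorted_sort_key)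
    hence "map (\<lambda>j. - a j) xs ! t \<le> map (\<lambda>j. - a j) xs ! t'"
      using that \<open>length xs = n\<close> by (intro sorted_nth_mono) auto
    thus ?thesis using that \<open>length xs = n\<close> by simp
  qed
  ultimately show ?thesis using that by blast
qed

text \<open>\<open>a j\<close> is bidder \<open>j\<close>'s value and \<open>l j i\<close> its lower estimate over bidder \<open>i\<close>'s signal;
  \<open>\<sigma>\<close> lists the bidders by decreasing value.\<close>
locale ranked_bidders =
  fixes n m :: nat and d :: real and a :: "nat \<Rightarrow> real" and l :: "nat \<Rightarrow> nat \<Rightarrow> real"
    and \<sigma> :: "nat \<Rightarrow> nat"
  assumes m_pos: "1 \<le> m" and m_less: "m < n"
    and a_pos: "\<And>j. j < n \<Longrightarrow> 0 < a j"
    and l_nonneg: "\<And>i j. i < n \<Longrightarrow> j < n \<Longrightarrow> 0 \<le> l j i"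
    and l_le_a: "\<And>i j. i < n \<Longrightarrow> j < n \<Longrightarrow> l j i \<le> a j"
    and self_bounding: "\<And>j. j < n \<Longrightarrow> (\<Sum>i<n. a j - l j i) \<le> d * a j"
    and \<sigma>_bij: "bij_betw \<sigma> {..<n} {..<n}"
    and \<sigma>_decreasing: "\<And>t t'. t \<le> t' \<Longrightarrow> t' < n \<Longrightarrow> a (\<sigma> t') \<le> a (\<sigma> t)"
begin

definition rank_of :: "nat \<Rightarrow> nat" where "rank_of = inv_into {..<n} \<sigma>"
definition Top :: "nat set" where "Top = \<sigma> ` {..<m}"
definition pivot :: nat where "pivot = \<sigma> (m - 1)"

definition beaten :: "real \<Rightarrow> (nat \<Rightarrow> nat) \<Rightarrow> nat \<Rightarrow> nat set" where
  "beaten r \<pi> i = {j. j < n \<and> j \<noteq> i \<and> gt_pi \<pi> (fr r (a i)) i (fr r (l j i)) j}"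

definition win :: "nat \<Rightarrow> real \<Rightarrow> (nat \<Rightarrow> nat) \<Rightarrow> real" where
  "win i r \<pi> = (if n - m \<le> card (beaten r \<pi> i) then 1 else 0)"

definition separates :: "real \<Rightarrow> nat \<Rightarrow> nat \<Rightarrow> bool" where
  "separates r j i \<longleftrightarrow> l j i < fr r (a j)"

lemma \<sigma>_less: "t < n \<Longrightarrow> \<sigma> t < n"
  using bij_betw_apply[OF \<sigma>_bij] by auto

lemma rank_of_less: "j < n \<Longrightarrow> rank_of j < n"
  using bij_betw_apply[OF bij_betw_inv_into[OF \<sigma>_bij]] by (auto simp: rank_of_def)

lemma \<sigma>_rank_of: "j < n \<Longrightarrow> \<sigma> (rank_of j) = j"
  using \<sigma>_bij by (simp add: rank_of_def bij_betw_inv_into_right)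

lemma inj_on_\<sigma>: "inj_on \<sigma> {..<n}"
  using \<sigma>_bij by (rule bij_betw_imp_inj_on)

lemma Top_subset: "Top \<subseteq> {..<n}"
  using m_less \<sigma>_less by (auto simp: Top_def)

lemma finite_Top [simp]: "finite Top"
  by (simp add: Top_def)

lemma card_Top: "card Top = m"
  unfolding Top_def using m_less by (subst card_image) (auto intro: inj_on_subset[OF inj_on_\<sigma>])

lemma rank_of_ge_if_not_Top: "j < n \<Longrightarrow> j \<notin> Top \<Longrightarrow> m \<le> rank_of j"
  unfolding Top_def by (metis \<sigma>_rank_of image_eqI lessThan_iff not_le)

lemma a_le_Top: assumes "k \<in> Top" "j < n" "j \<notin> Top" shows "a j \<le> a k"
proof -
  obtain t where "t < m" "k = \<sigma> t" using assms(1) by (auto simp: Top_def)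
  thus ?thesis
    using \<sigma>_decreasing[of t "rank_of j"] rank_of_ge_if_not_Top[OF assms(2,3)] rank_of_less[OF assms(2)] \<sigma>_rank_of[OF assms(2)]
    by simp
qed

lemma pivot_in_Top: "pivot \<in> Top"
  using m_pos by (auto simp: Top_def pivot_def)

lemma a_pivot_le: "k \<in> Top \<Longrightarrow> a pivot \<le> a k"
  using m_less by (auto simp: Top_def pivot_def intro!: \<sigma>_decreasing)

lemma a_le_pivot: "j < n \<Longrightarrow> j \<notin> Top \<Longrightarrow> a j \<le> a pivot"
  using a_le_Top[OF pivot_in_Top] .

lemma fr_l_eq_if_not_separates:
  "i < n \<Longrightarrow> j < n \<Longrightarrow> \<not> separates r j i \<Longrightarrow> fr r (l j i) = fr r (a j)"
  unfolding separates_def by (rule fr_eq_if_not_less_fr[OF l_le_a])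

definition level :: "real \<Rightarrow> real" where "level r = fr r (a pivot)"
definition tied :: "real \<Rightarrow> nat set" where "tied r = {k\<in>Top. fr r (a k) = level r}"
definition bucket :: "real \<Rightarrow> nat set" where
  "bucket r = {j. j < n \<and> j \<notin> Top \<and> fr r (a j) = level r}"
definition unseparated :: "real \<Rightarrow> nat \<Rightarrow> nat set" where
  "unseparated r i = {j\<in>bucket r. j \<noteq> i \<and> \<not> separates r j i}"
definition rivals :: "real \<Rightarrow> nat \<Rightarrow> nat set" where
  "rivals r i = insert i (tied r \<union> unseparated r i)"

lemma beaten_subset: "beaten r \<pi> i \<subseteq> {..<n} - {i}"
  by (auto simp: beaten_def)

lemma beaten_meets_Top:
  assumes "i < n" "i \<notin> Top" "n - m \<le> card (beaten r \<pi> i)"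
  obtains k where "k \<in> Top" "k \<in> beaten r \<pi> i"
proof -
  have "\<not> beaten r \<pi> i \<subseteq> {..<n} - {i} - Top"
  proof
    assume "beaten r \<pi> i \<subseteq> {..<n} - {i} - Top"
    hence "card (beaten r \<pi> i) \<le> card ({..<n} - {i} - Top)" by (intro card_mono) auto
    also have "\<dots> = n - 1 - m"
      using assms(1,2) Top_subset card_Top by (subst card_Diff_subset) auto
    finally show False using assms(3) m_less by linarith
  qed
  thus thesis using that beaten_subset by blast
qed

lemma card_unbeaten_le:
  assumes "i < n" "n - m \<le> card (beaten r \<pi> i)"
  shows "card ({..<n} - {i} - beaten r \<pi> i) \<le> m - 1"
  using assms beaten_subset[of r \<pi> i] by (subst card_Diff_subset) (auto intro: finite_subset)

context
  fixes i r \<pi>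
  assumes i: "i < n" "i \<notin> Top"
    and no_separation: "\<forall>k\<in>Top. \<not> separates r k i"
    and wins: "n - m \<le> card (beaten r \<pi> i)"
begin

lemma winner_at_level: "fr r (a i) = level r"
proof -
  obtain k where k: "k \<in> Top" "k \<in> beaten r \<pi> i" using beaten_meets_Top[OF i wins] .
  have "fr r (l k i) = fr r (a k)"
    using k(1) Top_subset i no_separation by (intro fr_l_eq_if_not_separates) auto
  moreover have "fr r (a i) \<le> fr r (a k)" using a_le_Top[OF k(1) i] by (rule fr_mono)
  ultimately have "fr r (a i) = fr r (a k)" using k(2) by (auto simp: beaten_def gt_pi_def)
  moreover have "fr r (a i) \<le> level r" "level r \<le> fr r (a k)"
    unfolding level_def using a_le_pivot[OF i] a_pivot_le[OF k(1)] by (auto intro: fr_mono)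
  ultimately show ?thesis by linarith
qed

lemma winner_in_bucket: "i \<in> bucket r"
  using i winner_at_level by (simp add: bucket_def)

lemma fr_l_eq_level_if_rival: assumes "j \<in> tied r \<union> unseparated r i" shows "fr r (l j i) = level r"
proof -
  have "j < n" "\<not> separates r j i" "fr r (a j) = level r"
    using assms Top_subset no_separation by (auto simp: tied_def unseparated_def bucket_def)
  thus ?thesis using fr_l_eq_if_not_separates i by simp
qed

text \<open>\<open>i\<close> loses to the top bidders above its level and to the rivals ahead of it in \<open>\<pi>\<close>,
  but to at most \<open>m - 1\<close> bidders in total.\<close>
lemma winner_among_top: "among_top (rivals r i) \<pi> (card (tied r)) i"
proof -
  define unbeaten where "unbeaten = {..<n} - {i} - beaten r \<pi> i"
  define higher where "higher = {j\<in>rivals r i. j \<noteq> i \<and> \<pi> i < \<pi> j}"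
  have "Top - tied r \<subseteq> unbeaten"
  proof
    fix k assume k: "k \<in> Top - tied r"
    have "level r \<le> fr r (a k)" using a_pivot_le k by (auto simp: level_def intro: fr_mono)
    hence "fr r (a i) < fr r (l k i)"
      using k Top_subset i no_separation winner_at_level fr_l_eq_if_not_separates
      by (fastforce simp: tied_def)
    thus "k \<in> unbeaten" using k Top_subset i by (auto simp: unbeaten_def beaten_def gt_pi_def)
  qed
  moreover have "higher \<subseteq> unbeaten"
  proof
    fix j assume j: "j \<in> higher"
    hence "j \<in> tied r \<union> unseparated r i" by (auto simp: higher_def rivals_def)
    hence "j < n" "fr r (l j i) = fr r (a i)"
      using Top_subset fr_l_eq_level_if_rival winner_at_level by (auto simp: tied_def unseparated_def bucket_def)
    thus "j \<in> unbeaten" using j by (auto simp: unbeaten_def beaten_def higher_def gt_pi_def)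
  qed
  moreover have "(Top - tied r) \<inter> higher = {}"
    by (auto simp: higher_def rivals_def unseparated_def bucket_def)
  ultimately have "card (Top - tied r) + card higher \<le> card unbeaten"
    by (subst card_Un_disjoint[symmetric]) (auto intro!: card_mono simp: unbeaten_def intro: finite_subset)
  moreover have "card (Top - tied r) = m - card (tied r)" "card (tied r) \<le> m"
    using card_Top card_mono[of Top "tied r"] by (auto simp: card_Diff_subset tied_def)
  ultimately have "card higher < card (tied r)"
    using card_unbeaten_le[OF i(1) wins] m_pos unfolding unbeaten_def by linarith
  thus ?thesis by (simp add: among_top_def higher_def)
qed

end

lemma win_le:
  assumes "i < n"
  shows "win i r \<pi> \<le> of_bool (i \<in> Top) + (\<Sum>k\<in>Top. of_bool (separates r k i))
    + of_bool (i \<in> bucket r \<and> among_top (rivals r i) \<pi> (card (tied r)) i)"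
proof (cases "i \<in> Top \<or> (\<exists>k\<in>Top. separates r k i)")
  case True
  hence "1 \<le> of_bool (i \<in> Top) + (\<Sum>k\<in>Top. of_bool (separates r k i) :: real)"
    by (auto simp: Suc_le_eq card_gt_0_iff)
  thus ?thesis by (simp add: win_def)
next
  case False
  thus ?thesis using winner_in_bucket winner_among_top assms by (auto simp: win_def sum_nonneg)
qed

definition separated :: "real \<Rightarrow> nat \<Rightarrow> nat set" where
  "separated r i = {j\<in>bucket r. j \<noteq> i \<and> separates r j i}"

definition charge :: "nat \<Rightarrow> real" where
  "charge j = (if j \<in> Top then 1 else real m * harm_weight (rank_of j - m + 1))"

definition sep_count :: "real \<Rightarrow> nat \<Rightarrow> real" where
  "sep_count r j = (\<Sum>i<n. of_bool (separates r j i))"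

lemma charge_nonneg: "0 \<le> charge j"
  by (simp add: charge_def harm_weight_nonneg)

lemma bucket_subset: "bucket r \<subseteq> {..<n} - Top"
  by (auto simp: bucket_def)

lemma finite_bucket [simp]: "finite (bucket r)"
  using bucket_subset by (rule finite_subset) simp

lemma tied_subset: "tied r \<subseteq> Top"
  by (auto simp: tied_def)

lemma card_tied: "1 \<le> card (tied r)" "card (tied r) \<le> m"
proof -
  have "pivot \<in> tied r" using pivot_in_Top by (simp add: tied_def level_def)
  thus "1 \<le> card (tied r)" using finite_subset[OF tied_subset] by (auto simp: Suc_le_eq card_gt_0_iff)
  show "card (tied r) \<le> m" using card_mono[OF finite_Top tied_subset] card_Top by simp
qed

lemma rivals_subset: "i < n \<Longrightarrow> rivals r i \<subseteq> {..<n}"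
  unfolding rivals_def unseparated_def bucket_def tied_def using Top_subset by auto

lemma card_rivals:
  assumes "i \<in> bucket r"
  shows "card (rivals r i) = card (tied r) + card (unseparated r i) + 1"
proof -
  have "tied r \<inter> unseparated r i = {}" "i \<notin> tied r \<union> unseparated r i"
    using assms tied_subset bucket_subset by (auto simp: unseparated_def)
  moreover have "finite (tied r)" "finite (unseparated r i)"
    using finite_subset[OF tied_subset] by (auto simp: unseparated_def)
  ultimately show ?thesis by (simp add: rivals_def card_Un_disjoint)
qed

lemma card_bucket:
  assumes "i \<in> bucket r"
  shows "card (separated r i) + card (unseparated r i) + 1 = card (bucket r)"
proof -
  have "bucket r = insert i (separated r i \<union> unseparated r i)"
    using assms by (auto simp: separated_def unseparated_def)
  moreover have "separated r i \<inter> unseparated r i = {}" "i \<notin> separated r i \<union> unseparated r i"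
    by (auto simp: separated_def unseparated_def)
  moreover have "finite (separated r i)" "finite (unseparated r i)"
    by (simp_all add: separated_def unseparated_def)
  ultimately show ?thesis by (simp add: card_Un_disjoint)
qed

text \<open>Values are sorted, so every bidder ranked between \<open>m\<close> and a bucket member is in the bucket.\<close>
lemma rank_of_in_bucket:
  assumes "j \<in> bucket r"
  shows "m \<le> rank_of j" "rank_of j - m + 1 \<le> card (bucket r)"
proof -
  have j: "j < n" "j \<notin> Top" "fr r (a j) = level r" using assms by (auto simp: bucket_def)
  show "m \<le> rank_of j" using rank_of_ge_if_not_Top[OF j(1,2)] .
  have "\<sigma> ` {m..rank_of j} \<subseteq> bucket r"
  proof
    fix x assume "x \<in> \<sigma> ` {m..rank_of j}"
    then obtain t where t: "m \<le> t" "t \<le> rank_of j" "x = \<sigma> t" by auto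
    have "t < n" using t rank_of_less[OF j(1)] by simp
    have "x < n" using \<open>t < n\<close> t(3) \<sigma>_less by simp
    have "x \<notin> Top"
    proof
      assume "x \<in> Top"
      then obtain t' where "t' < m" "x = \<sigma> t'" by (auto simp: Top_def)
      hence "t' = t" using inj_onD[OF inj_on_\<sigma>] \<open>t < n\<close> t(3) m_less by simp
      thus False using \<open>t' < m\<close> t(1) by simp
    qed
    note x = \<open>x < n\<close> \<open>x \<notin> Top\<close>
    have "a j \<le> a x" using \<sigma>_decreasing[OF t(2) rank_of_less[OF j(1)]] t \<sigma>_rank_of[OF j(1)] by simp
    hence "level r \<le> fr r (a x)" unfolding j(3)[symmetric] by (rule fr_mono)
    moreover have "fr r (a x) \<le> level r" unfolding level_def using a_le_pivot[OF x] by (rule fr_mono)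
    ultimately show "x \<in> bucket r" using x by (simp add: bucket_def)
  qed
  moreover have "inj_on \<sigma> {m..rank_of j}"
    using rank_of_less[OF j(1)] by (intro inj_on_subset[OF inj_on_\<sigma>]) auto
  ultimately show "rank_of j - m + 1 \<le> card (bucket r)"
    using card_mono[OF finite_bucket[of r], of "\<sigma> ` {m..rank_of j}"] \<open>m \<le> rank_of j\<close>
    by (simp add: card_image Suc_diff_le)
qed

lemma sum_win_perms_le:
  assumes "i < n"
  shows "(\<Sum>\<pi>\<in>{\<pi>. \<pi> permutes {..<n}}. win i r \<pi>) / fact n
    \<le> of_bool (i \<in> Top) + (\<Sum>k\<in>Top. of_bool (separates r k i))
      + of_bool (i \<in> bucket r) * (card (tied r) / card (rivals r i))"
proof -
  define P where "P = {\<pi>. \<pi> permutes {..<n}}"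
  define X where "X = of_bool (i \<in> Top) + (\<Sum>k\<in>Top. of_bool (separates r k i) :: real)"
  have "finite P" "card P = fact n" by (simp_all add: P_def finite_permutations card_permutations)
  have "(\<Sum>\<pi>\<in>P. win i r \<pi>) \<le> (\<Sum>\<pi>\<in>P. X + of_bool (i \<in> bucket r \<and> among_top (rivals r i) \<pi> (card (tied r)) i))"
    unfolding X_def by (intro sum_mono win_le[OF assms])
  also have "\<dots> = fact n * X + of_bool (i \<in> bucket r) * real (card {\<pi>\<in>P. among_top (rivals r i) \<pi> (card (tied r)) i})"
    using \<open>finite P\<close> \<open>card P = fact n\<close> by (simp add: sum.distrib Int_def conj_commute)
  also have "\<dots> \<le> fact n * X + of_bool (i \<in> bucket r) * (card (tied r) * fact n / card (rivals r i))"
  proof -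
    have "i \<in> rivals r i" "finite (rivals r i)"
      using finite_subset[OF rivals_subset[OF assms]] by (auto simp: rivals_def)
    hence "0 < card (rivals r i)" by (auto simp: card_gt_0_iff)
    hence "real (card {\<pi>\<in>P. among_top (rivals r i) \<pi> (card (tied r)) i}) \<le> card (tied r) * fact n / card (rivals r i)"
      using card_permutes_among_top_le[OF rivals_subset[OF assms] _ \<open>i \<in> rivals r i\<close>, of "card (tied r)"]
      by (simp add: P_def card_permutations field_simps flip: of_nat_mult)
    thus ?thesis by (intro add_left_mono mult_left_mono) auto
  qed
  finally have "(\<Sum>\<pi>\<in>P. win i r \<pi>)
      \<le> (X + of_bool (i \<in> bucket r) * (card (tied r) / card (rivals r i))) * fact n"
    by (simp add: field_simps)
  thus ?thesis unfolding X_def P_def by (simp add: pos_divide_le_eq del: sum_of_bool_eq)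
qed

lemma inj_on_rank_shift: "inj_on (\<lambda>j. rank_of j - m + 1) ({..<n} - Top)"
proof (rule inj_onI)
  fix x y assume x: "x \<in> {..<n} - Top" and y: "y \<in> {..<n} - Top"
    and "rank_of x - m + 1 = rank_of y - m + 1"
  hence "rank_of x = rank_of y" using rank_of_ge_if_not_Top[of x] rank_of_ge_if_not_Top[of y] by simp
  thus "x = y" using x y \<sigma>_rank_of by (metis DiffD1 lessThan_iff)
qed

lemma tied_div_rivals_le_unseparated:
  assumes "i \<in> bucket r"
  shows "card (tied r) / card (rivals r i) \<le> m / (card (unseparated r i) + 2)"
proof -
  define k \<nu> where "k = card (tied r)" and "\<nu> = card (unseparated r i)"
  have "real k \<le> m" "1 \<le> real m" using card_tied[of r] m_pos by (auto simp: k_def)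
  hence "real k * \<nu> \<le> real m * \<nu>" "real k \<le> real m * real k"
    using mult_right_mono[of 1 "real m" "real k"] by (auto intro: mult_right_mono)
  hence "real k * (\<nu> + 2) \<le> real m * (k + \<nu> + 1)"
    using \<open>real k \<le> m\<close> by (simp add: algebra_simps)
  thus ?thesis using card_rivals[OF assms] by (simp add: k_def \<nu>_def field_simps)
qed

text \<open>The separated members of the bucket have distinct shifted ranks in \<open>{1..card (bucket r)}\<close>.\<close>
lemma inverse_unseparated_le:
  assumes "i \<in> bucket r"
  shows "1 / (card (unseparated r i) + 2)
    \<le> 1 / (card (bucket r) + 1) + (\<Sum>j\<in>separated r i. harm_weight (rank_of j - m + 1))"
proof -
  define R where "R = (\<lambda>j. rank_of j - m + 1) ` separated r i"
  have inj: "inj_on (\<lambda>j. rank_of j - m + 1) (separated r i)"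
    using bucket_subset by (intro inj_on_subset[OF inj_on_rank_shift]) (auto simp: separated_def)
  have "R \<subseteq> {1..card (bucket r)}"
    using rank_of_in_bucket by (auto simp: R_def separated_def)
  moreover have "card (bucket r) - card R + 1 = card (unseparated r i) + 2"
    using card_bucket[OF assms] card_image[OF inj] by (simp add: R_def)
  ultimately have "1 / (card (unseparated r i) + 2) - 1 / (card (bucket r) + 1) \<le> (\<Sum>t\<in>R. harm_weight t)"
    using sum_harm_weight_ge[of R "card (bucket r)"] by simp
  also have "\<dots> = (\<Sum>j\<in>separated r i. harm_weight (rank_of j - m + 1))"
    unfolding R_def by (rule sum.reindex[OF inj, unfolded comp_def])
  finally show ?thesis by simp
qed

lemma tied_div_rivals_le:
  assumes "i \<in> bucket r"
  shows "card (tied r) / card (rivals r i) \<le> m / (card (bucket r) + 1) + (\<Sum>j\<in>separated r i. charge j)"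
proof -
  have "(\<Sum>j\<in>separated r i. charge j) = m * (\<Sum>j\<in>separated r i. harm_weight (rank_of j - m + 1))"
    unfolding sum_distrib_left using bucket_subset by (intro sum.cong) (auto simp: charge_def separated_def)
  moreover have "card (tied r) / card (rivals r i) \<le> m * (1 / (card (unseparated r i) + 2))"
    using tied_div_rivals_le_unseparated[OF assms] by simp
  ultimately show ?thesis
    using mult_left_mono[OF inverse_unseparated_le[OF assms], of m] by (simp add: distrib_left)
qed

lemma sum_bucket_le:
  "(\<Sum>i\<in>bucket r. card (tied r) / card (rivals r i)) \<le> m + (\<Sum>j\<in>{..<n} - Top. charge j * sep_count r j)"
proof -
  define \<beta> where "\<beta> = card (bucket r)"
  have sep_le: "(\<Sum>j\<in>separated r i. charge j) \<le> (\<Sum>j\<in>{..<n} - Top. charge j * of_bool (separates r j i))" for i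
  proof -
    have "separated r i \<subseteq> ({..<n} - Top) \<inter> {j. separates r j i}"
      using bucket_subset by (auto simp: separated_def)
    thus ?thesis by (simp add: sum_mono2 charge_nonneg)
  qed
  have "(\<Sum>i\<in>bucket r. card (tied r) / card (rivals r i))
      \<le> (\<Sum>i\<in>bucket r. m / (\<beta> + 1) + (\<Sum>j\<in>separated r i. charge j))"
    unfolding \<beta>_def by (intro sum_mono tied_div_rivals_le)
  also have "\<dots> = m * (\<beta> / (\<beta> + 1)) + (\<Sum>i\<in>bucket r. \<Sum>j\<in>separated r i. charge j)"
    by (simp add: sum.distrib \<beta>_def)
  also have "(\<Sum>i\<in>bucket r. \<Sum>j\<in>separated r i. charge j)
      \<le> (\<Sum>i\<in>bucket r. \<Sum>j\<in>{..<n} - Top. charge j * of_bool (separates r j i))"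
    by (intro sum_mono sep_le)
  also have "\<dots> \<le> (\<Sum>i<n. \<Sum>j\<in>{..<n} - Top. charge j * of_bool (separates r j i))"
    using bucket_subset by (intro sum_mono2 sum_nonneg) (auto simp: charge_nonneg)
  also have "m * (\<beta> / (\<beta> + 1)) \<le> m" by (rule mult_left_le) auto
  also have "(\<Sum>i<n. \<Sum>j\<in>{..<n} - Top. charge j * of_bool (separates r j i)) = (\<Sum>j\<in>{..<n} - Top. charge j * sep_count r j)"
    by (subst sum.swap) (simp add: sep_count_def sum_distrib_left del: sum_of_bool_eq sum_mult_of_bool_eq)
  finally show ?thesis by simp
qed

lemma average_win_le:
  "(\<Sum>i<n. (\<Sum>\<pi>\<in>{\<pi>. \<pi> permutes {..<n}}. win i r \<pi>) / fact n) \<le> 2 * m + (\<Sum>j<n. charge j * sep_count r j)"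
proof -
  have "(\<Sum>i<n. (\<Sum>\<pi>\<in>{\<pi>. \<pi> permutes {..<n}}. win i r \<pi>) / fact n)
      \<le> (\<Sum>i<n. of_bool (i \<in> Top) + (\<Sum>k\<in>Top. of_bool (separates r k i))
            + of_bool (i \<in> bucket r) * (card (tied r) / card (rivals r i)))"
    by (intro sum_mono sum_win_perms_le) simp
  also have "\<dots> = m + (\<Sum>k\<in>Top. charge k * sep_count r k) + (\<Sum>i\<in>bucket r. card (tied r) / card (rivals r i))"
  proof -
    have "(\<Sum>i<n. of_bool (i \<in> Top) :: real) = m"
      using Top_subset card_Top by (simp add: Int_absorb1)
    moreover have "(\<Sum>i<n. \<Sum>k\<in>Top. of_bool (separates r k i)) = (\<Sum>k\<in>Top. charge k * sep_count r k)"
      by (subst sum.swap) (simp add: charge_def sep_count_def del: sum_of_bool_eq)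
    moreover have "(\<Sum>i<n. of_bool (i \<in> bucket r) * (card (tied r) / card (rivals r i)))
        = (\<Sum>i\<in>bucket r. card (tied r) / card (rivals r i))"
      using bucket_subset by (intro sum.mono_neutral_cong_right) auto
    ultimately show ?thesis by (simp only: sum.distrib)
  qed
  also have "\<dots> \<le> 2 * m + (\<Sum>j<n. charge j * sep_count r j)"
    using sum_bucket_le[of r] sum.subset_diff[OF Top_subset, of "\<lambda>j. charge j * sep_count r j"] by simp
  finally show ?thesis .
qed

lemma d_nonneg: "0 \<le> d"
proof -
  have "0 \<le> (\<Sum>i<n. a 0 - l 0 i)" using m_less l_le_a by (intro sum_nonneg) auto
  also have "\<dots> \<le> d * a 0" using self_bounding m_less by simp
  finally show ?thesis using a_pos[of 0] m_less by (simp add: zero_le_mult_iff)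
qed

lemma sum_charge_le: "(\<Sum>j<n. charge j) \<le> 2 * m"
proof -
  have "(\<Sum>j\<in>{..<n} - Top. harm_weight (rank_of j - m + 1)) = (\<Sum>t\<in>(\<lambda>j. rank_of j - m + 1) ` ({..<n} - Top). harm_weight t)"
    by (rule sum.reindex[OF inj_on_rank_shift, unfolded comp_def, symmetric])
  also have "\<dots> \<le> 1"
    using rank_of_less by (intro sum_harm_weight_le_1[where N = n]) (auto simp: Suc_le_eq less_imp_diff_less)
  finally have "(\<Sum>j\<in>{..<n} - Top. charge j) \<le> m"
    by (simp add: charge_def sum_distrib_left[symmetric] mult_left_le)
  moreover have "(\<Sum>j\<in>Top. charge j) = m" by (simp add: charge_def card_Top)
  ultimately show ?thesis using sum.subset_diff[OF Top_subset, of charge] by simp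
qed

lemma measurable_win [measurable]: "(\<lambda>r. win i r \<pi>) \<in> borel_measurable borel"
proof -
  define G where "G j r \<longleftrightarrow> j \<noteq> i \<and> gt_pi \<pi> (fr r (a i)) i (fr r (l j i)) j" for j r
  have "Measurable.pred borel (G j)" for j
    unfolding G_def gt_pi_def by measurable
  hence [measurable]: "(\<lambda>r. \<Sum>j<n. of_bool (G j r) :: real) \<in> borel_measurable borel"
    by (intro borel_measurable_sum) measurable
  have "(\<lambda>r. win i r \<pi>) = (\<lambda>r. if real (n - m) \<le> (\<Sum>j<n. of_bool (G j r)) then 1 else 0)"
  proof
    fix r
    have "beaten r \<pi> i = {..<n} \<inter> {j. G j r}" by (auto simp: beaten_def G_def)
    thus "win i r \<pi> = (if real (n - m) \<le> (\<Sum>j<n. of_bool (G j r)) then 1 else 0)"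
      by (simp add: win_def)
  qed
  also have "\<dots> \<in> borel_measurable borel" by measurable
  finally show ?thesis .
qed

lemma integrable_win: "integrable uniform01 (\<lambda>r. win i r \<pi>)"
  by (rule integrable_uniform01[OF measurable_win, where B = 1]) (simp add: win_def)

lemma integrable_separates: "integrable uniform01 (\<lambda>r. of_bool (separates r j i) :: real)"
  by (rule integrable_uniform01[where B = 1]) (auto simp: separates_def)

lemma integrable_sep_count: "integrable uniform01 (\<lambda>r. sep_count r j)"
  unfolding sep_count_def by (intro Bochner_Integration.integrable_sum integrable_separates)

lemma integral_sep_count_le:
  assumes "j < n" shows "(\<integral>r. sep_count r j \<partial>uniform01) \<le> 2 * d"
proof -
  have "(\<integral>r. sep_count r j \<partial>uniform01) = (\<Sum>i<n. \<integral>r. of_bool (separates r j i) \<partial>uniform01)"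
    unfolding sep_count_def by (rule Bochner_Integration.integral_sum) (rule integrable_separates)
  also have "\<dots> \<le> (\<Sum>i<n. 2 * (1 - l j i / a j))"
    unfolding separates_def using assms l_nonneg l_le_a a_pos
    by (intro sum_mono integral_uniform01_fr_greater_le) auto
  also have "\<dots> = 2 * ((\<Sum>i<n. a j - l j i) / a j)"
    using a_pos[OF assms] by (simp add: sum_distrib_left sum_divide_distrib diff_divide_distrib)
  also have "\<dots> \<le> 2 * d"
    using self_bounding[OF assms] a_pos[OF assms] by (simp add: divide_le_eq)
  finally show ?thesis .
qed

lemma expected_wins_le:
  "(\<Sum>i<n. (\<Sum>\<pi>\<in>{\<pi>. \<pi> permutes {..<n}}. \<integral>r. win i r \<pi> \<partial>uniform01) / fact n) \<le> 2 * m + 4 * d * m"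
proof -
  have "(\<Sum>i<n. (\<Sum>\<pi>\<in>{\<pi>. \<pi> permutes {..<n}}. \<integral>r. win i r \<pi> \<partial>uniform01) / fact n)
      = (\<integral>r. (\<Sum>i<n. (\<Sum>\<pi>\<in>{\<pi>. \<pi> permutes {..<n}}. win i r \<pi>) / fact n) \<partial>uniform01)"
    using integrable_win by (simp add: Bochner_Integration.integral_sum Bochner_Integration.integrable_sum)
  also have "\<dots> \<le> (\<integral>r. 2 * m + (\<Sum>j<n. charge j * sep_count r j) \<partial>uniform01)"
    using finite_measure.integrable_const[OF finite_measure_uniform01]
    by (intro integral_mono average_win_le Bochner_Integration.integrable_sum integrable_divide integrable_win
        Bochner_Integration.integrable_add integrable_mult_right integrable_sep_count)
  also have "\<dots> = 2 * m + (\<Sum>j<n. charge j * (\<integral>r. sep_count r j \<partial>uniform01))"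
    by (subst Bochner_Integration.integral_add)
      (auto intro!: Bochner_Integration.integrable_sum integrable_mult_right integrable_sep_count
        simp: Bochner_Integration.integral_sum integrable_sep_count
        finite_measure.integrable_const[OF finite_measure_uniform01])
  also have "\<dots> \<le> 2 * m + (\<Sum>j<n. charge j * (2 * d))"
    by (intro add_left_mono sum_mono mult_left_mono integral_sep_count_le charge_nonneg) auto
  also have "\<dots> = 2 * m + (\<Sum>j<n. charge j) * (2 * d)"
    by (simp add: sum_distrib_right)
  also have "\<dots> \<le> 2 * m + 2 * m * (2 * d)"
    using sum_charge_le d_nonneg by (intro add_left_mono mult_right_mono) auto
  finally show ?thesis by (simp add: algebra_simps)
qed

end

lemma lower_est_bounds:
  assumes "i < n" "j < n" "s \<in> PiE {..<n} S"
    and pos: "\<And>t. t \<in> PiE {..<n} S \<Longrightarrow> 0 < v j t"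
  shows "0 \<le> lower_est S v j i s" "lower_est S v j i s \<le> v j s"
proof -
  have upd: "s(i := x) \<in> PiE {..<n} S" if "x \<in> S i" for x
    using PiE_fun_upd[OF that assms(3)] assms(1) by (simp add: insert_absorb)
  have "s i \<in> S i" using assms(1,3) by (auto simp: PiE_iff)
  show "0 \<le> lower_est S v j i s"
    unfolding lower_est_def using \<open>s i \<in> S i\<close> upd pos by (intro cINF_greatest) (auto intro: less_imp_le)
  have "bdd_below ((\<lambda>x. v j (s(i := x))) ` S i)"
    using upd pos by (intro bdd_belowI2[where m = 0]) (auto intro: less_imp_le)
  from cINF_lower[OF this \<open>s i \<in> S i\<close>] show "lower_est S v j i s \<le> v j s"
    by (simp add: lower_est_def)
qed

theorem mainTheorem16:
  fixes n m d :: nat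
    and S :: "nat \<Rightarrow> real set"
    and v :: "nat \<Rightarrow> (nat \<Rightarrow> real) \<Rightarrow> real"
    and s :: "nat \<Rightarrow> real"
  assumes "1 \<le> m" and "m < n"
    and "1 \<le> d" and "d \<le> n"
    and "\<And>i t. i < n \<Longrightarrow> t \<in> PiE {..<n} S \<Longrightarrow> v i t > 0"
    and "\<And>i. i < n \<Longrightarrow> self_bounding n S (real d) (v i)"
    and "s \<in> PiE {..<n} S"
  shows "(\<Sum>i<n. exp_cm n S v m s i) \<le> 4 * (real d + 1) * real m
       \<and> (\<Sum>i<n. exp_cm n S v m s i / (4 * (real d + 1))) \<le> real m"
proof -
  obtain \<sigma> where \<sigma>: "bij_betw \<sigma> {..<n} {..<n}" "\<And>t t'. t \<le> t' \<Longrightarrow> t' < n \<Longrightarrow> v (\<sigma> t') s \<le> v (\<sigma> t) s"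
    using obtain_decreasing_enumeration[of n "\<lambda>j. v j s"] by blast
  interpret ranked_bidders n m "real d" "\<lambda>j. v j s" "\<lambda>j i. lower_est S v j i s" \<sigma>
    using assms lower_est_bounds \<sigma>
    by unfold_locales (auto simp: self_bounding_def lower_est_def)
  have "exp_cm n S v m s i = (\<Sum>\<pi>\<in>{\<pi>. \<pi> permutes {..<n}}. \<integral>r. win i r \<pi> \<partial>uniform01) / fact n" for i
    by (simp add: exp_cm_def cm_def win_def beaten_def set_integral_eq_uniform01)
  hence "(\<Sum>i<n. exp_cm n S v m s i) \<le> 4 * (real d + 1) * real m"
    using expected_wins_le by (simp add: algebra_simps)
  thus ?thesis by (simp add: sum_divide_distrib[symmetric] pos_divide_le_eq mult.commute)
qed

end
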